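(* Let $I\subset\mathbb{R}$ be an interval, let $1\le p\le\infty$, and let $f\in W^{1,p}(I)$ be a continuous real-valued function. Then $$\dim_{A,reg}^\theta\operatorname{Graph}(f)\le 1+\frac{\theta}{(1-\theta)p}$$ for all $0<\theta<\tfrac{p}{p+1}$ (interpreting $\tfrac{p}{p+1}=1$ and $\tfrac{\theta}{(1-\theta)p}=0$ when $p=\infty$).
   Context: Here $f\in W^{1,p}(I)$ means that $f$ has a weak derivative $f'$ which is a function with $f'\in L^p(I)$ (no integrability condition on $f$ itself is imposed). $\operatorname{Graph}(f)=\{(t,f(t)):t\in I\}$. For a bounded set $F\subset\mathbb{R}^2$ and $r>0$, $N(F,r)$ is the least number of sets of diameter at most $r$ needed to cover $F$; $D(\mathbf z,R)$ is the closed disc of radius $R$ centered at $\mathbf z$. For $E\subset\mathbb{R}^2$ and $\theta\in(0,1)$, $$\dim_{A,reg}^\theta(E)=\inf\{\gamma>0:\ \exists C>0 \text{ s.t. } N(D(\mathbf z,R)\cap E,r)\le C(R/r)^\gamma \text{ for all } 0<r\le R^{1/\theta}<R<1,\ \mathbf z\in E\}.$$ *)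

theory Defs
  imports "HOL-Analysis.Analysis"
begin

definition smooth_fun :: "(real \<Rightarrow> real) \<Rightarrow> bool" where
  "smooth_fun \<phi> \<longleftrightarrow> (\<forall>k::nat. \<forall>x. ((deriv ^^ k) \<phi>) differentiable (at x))"

definition test_fun :: "real set \<Rightarrow> (real \<Rightarrow> real) \<Rightarrow> bool" where
  "test_fun U \<phi> \<longleftrightarrow> smooth_fun \<phi> \<and> compact (closure {x. \<phi> x \<noteq> 0})
      \<and> closure {x. \<phi> x \<noteq> 0} \<subseteq> U"

definition weak_deriv :: "(real \<Rightarrow> real) \<Rightarrow> (real \<Rightarrow> real) \<Rightarrow> real set \<Rightarrow> bool" where
  "weak_deriv f g I \<longleftrightarrow> (\<forall>\<phi>. test_fun (interior I) \<phi> \<longrightarrow>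
      integrable lebesgue (\<lambda>x. f x * deriv \<phi> x) \<and>
      integrable lebesgue (\<lambda>x. g x * \<phi> x) \<and>
      (\<integral>x. f x * deriv \<phi> x \<partial>lebesgue) = - (\<integral>x. g x * \<phi> x \<partial>lebesgue))"

definition in_Lp :: "ereal \<Rightarrow> real set \<Rightarrow> (real \<Rightarrow> real) \<Rightarrow> bool" where
  "in_Lp p I g \<longleftrightarrow> g \<in> borel_measurable (lebesgue_on I) \<and>
     (if p = \<infinity> then (\<exists>C. AE x in lebesgue_on I. \<bar>g x\<bar> \<le> C)
      else integrable (lebesgue_on I) (\<lambda>x. \<bar>g x\<bar> powr real_of_ereal p))"

definition in_W1p :: "ereal \<Rightarrow> real set \<Rightarrow> (real \<Rightarrow> real) \<Rightarrow> bool" where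
  "in_W1p p I f \<longleftrightarrow> (\<exists>g. weak_deriv f g I \<and> in_Lp p I g)"

definition graph :: "real set \<Rightarrow> (real \<Rightarrow> real) \<Rightarrow> (real \<times> real) set" where
  "graph I f = (\<lambda>t. (t, f t)) ` I"

text \<open>Covering number N(F,r): least number of sets of diameter at most r covering F.
  (Sets are required bounded so that the diameter is meaningful.)\<close>
definition cover_num :: "(real \<times> real) set \<Rightarrow> real \<Rightarrow> nat" where
  "cover_num F r = (LEAST n. \<exists>C. finite C \<and> card C = n \<and>
      (\<forall>U\<in>C. bounded U \<and> diameter U \<le> r) \<and> F \<subseteq> \<Union>C)"

text \<open>Regularised Assouad spectrum (value in extended reals; Inf of the empty set is \<infinity>).\<close>
definition assouad_reg :: "real \<Rightarrow> (real \<times> real) set \<Rightarrow> ereal" where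
  "assouad_reg \<theta> E = (INF \<gamma>\<in>{\<gamma>::real. \<gamma> > 0 \<and> (\<exists>C>0. \<forall>r R z.
        0 < r \<and> 0 < R \<and> r \<le> R powr (1/\<theta>) \<and> R powr (1/\<theta>) < R \<and> R < 1 \<and> z \<in> E \<longrightarrow>
        real (cover_num (cball z R \<inter> E) r) \<le> C * (R / r) powr \<gamma>)}. ereal \<gamma>)"

end

theory Submission
  imports Defs "HOL-Computational_Algebra.Polynomial"
begin

text \<open>Let g be the weak derivative of f. Testing it against smooth windows shows that
  |f t - f s| is at most the integral of |g| over [s, t]. Cut the disc D(z, R), z = (t0, f t0),
  into columns of width r/2: over a column T the graph oscillates by at most the integral of |g|
  over T, so it is covered by (4/r) (that integral) + 1 squares of side r/2. Summing over the
  columns, N(D(z, R) \<inter> Graph f, r) \<le> 4R/r + 1 + (4/r) (integral of |g| over [t0 - 2R, t0 + 2R]),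
  and by Hoelder's inequality that integral is O(R^(1 - 1/p)). Finally r \<le> R^(1/\<theta>) gives
  R^(-1/p) \<le> (R/r)^(\<theta>/((1 - \<theta>) p)), whence the exponent 1 + \<theta>/((1 - \<theta>) p).\<close>

section \<open>A smooth bump and a smooth step\<close>

lemma power_div_fact_le_exp:
  fixes x :: real
  assumes "0 \<le> x"
  shows "x ^ n / fact n \<le> exp x"
proof -
  have "(\<Sum>k\<in>{n}. x ^ k /\<^sub>R fact k) \<le> (\<Sum>k. x ^ k /\<^sub>R fact k)"
    by (rule sum_le_suminf[OF summable_exp_generic]) (use assms in auto)
  then show ?thesis by (simp add: exp_def divide_inverse mult.commute)
qed

lemma exp_neg_inverse_div_power_le:
  fixes w :: real
  assumes "0 < w"
  shows "exp (- 1 / w) / w ^ m \<le> fact (m + 2) * w\<^sup>2"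
proof -
  define n where "n = m + 2"
  have "(1 / w) ^ n / fact n \<le> exp (1 / w)"
    by (rule power_div_fact_le_exp) (use assms in simp)
  then have "(1 / w) ^ n * exp (- 1 / w) \<le> exp (1 / w) * fact n * exp (- 1 / w)"
    by (intro mult_right_mono) (simp_all add: pos_divide_le_eq)
  also have "\<dots> = fact n"
    by (simp add: mult.commute[of "exp (1 / w)"] mult.assoc flip: exp_add)
  finally have "(1 / w) ^ n * exp (- 1 / w) * w\<^sup>2 \<le> fact n * w\<^sup>2"
    by (rule mult_right_mono) simp
  moreover have "exp (- 1 / w) / w ^ m = (1 / w) ^ n * exp (- 1 / w) * w\<^sup>2"
    using assms by (simp add: n_def power_add power_one_over field_simps power2_eq_square)
  ultimately show ?thesis by (simp add: n_def)
qed

lemma has_real_derivative_poly_exp_neg_inverse: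
  fixes Q W :: "real poly"
  assumes "poly W t \<noteq> 0"
  shows "((\<lambda>t. poly Q t / poly W t ^ m * exp (- 1 / poly W t)) has_real_derivative
     (poly (pderiv Q) t * (poly W t)\<^sup>2 - real m * poly Q t * poly (pderiv W) t * poly W t
        + poly Q t * poly (pderiv W) t) / poly W t ^ (m + 2) * exp (- 1 / poly W t)) (at t)"
  using assms
  by (auto intro!: derivative_eq_intros poly_DERIV) (cases m; auto simp: field_simps power2_eq_square)

definition bump_base :: "real poly" where
  "bump_base = [:0, 1, -1:]"

lemma poly_bump_base: "poly bump_base t = t * (1 - t)"
  by (simp add: bump_base_def algebra_simps)

text \<open>The recursion is the quotient rule
  \<open>(Q / W^(2k) * exp (-1/W))' = (Q' W^2 - 2k Q W' W + Q W') / W^(2k+2) * exp (-1/W)\<close>,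
  so \<open>bump_deriv k\<close> below is the \<open>k\<close>-th derivative of \<open>exp (-1 / (t (1 - t)))\<close> on \<open>(0, 1)\<close>.\<close>
fun bump_numer :: "nat \<Rightarrow> real poly" where
  "bump_numer 0 = 1"
| "bump_numer (Suc k) = pderiv (bump_numer k) * bump_base\<^sup>2
     - smult (of_nat (2 * k)) (bump_numer k * pderiv bump_base * bump_base)
     + bump_numer k * pderiv bump_base"

definition bump_deriv :: "nat \<Rightarrow> real \<Rightarrow> real" where
  "bump_deriv k t = (if 0 < t \<and> t < 1 then
     poly (bump_numer k) t / poly bump_base t ^ (2 * k) * exp (- 1 / poly bump_base t) else 0)"

lemma bump_deriv_eq_0: "t \<le> 0 \<or> 1 \<le> t \<Longrightarrow> bump_deriv k t = 0"
  by (auto simp: bump_deriv_def)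

lemma bump_deriv_0_nonneg: "0 \<le> bump_deriv 0 t"
  by (simp add: bump_deriv_def)

lemma bump_deriv_has_real_derivative_inside:
  assumes "0 < t" "t < 1"
  shows "(bump_deriv k has_real_derivative bump_deriv (Suc k) t) (at t)"
proof -
  have "poly bump_base t \<noteq> 0" using assms by (simp add: poly_bump_base)
  from has_real_derivative_poly_exp_neg_inverse[OF this, of "bump_numer k" "2 * k"]
  have "((\<lambda>t. poly (bump_numer k) t / poly bump_base t ^ (2 * k) * exp (- 1 / poly bump_base t))
      has_real_derivative bump_deriv (Suc k) t) (at t)"
    using assms by (simp add: bump_deriv_def algebra_simps power2_eq_square)
  then show ?thesis
    by (rule has_field_derivative_transform_within_open[where S = "{0<..<1}"])
       (use assms in \<open>auto simp: bump_deriv_def\<close>)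
qed

lemma bump_deriv_quadratic_bound:
  obtains B where "\<And>t. \<bar>bump_deriv k t\<bar> \<le> B * t\<^sup>2" "\<And>t. \<bar>bump_deriv k t\<bar> \<le> B * (t - 1)\<^sup>2"
proof -
  obtain M where M: "\<And>t. t \<in> {0..1} \<Longrightarrow> \<bar>poly (bump_numer k) t\<bar> \<le> M" "0 \<le> M"
  proof -
    have "compact (poly (bump_numer k) ` {0..1})"
      by (rule compact_continuous_image) (auto intro: continuous_intros)
    then obtain M where "\<forall>y\<in>poly (bump_numer k) ` {0..1}. norm y \<le> M"
      using compact_imp_bounded bounded_iff by metis
    then show ?thesis by (intro that[of "max 0 M"]) force+
  qed
  define B where "B = M * fact (2 * k + 2)"
  have "\<bar>bump_deriv k t\<bar> \<le> B * t\<^sup>2 \<and> \<bar>bump_deriv k t\<bar> \<le> B * (t - 1)\<^sup>2" for t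
  proof (cases "0 < t \<and> t < 1")
    case True
    define w where "w = t * (1 - t)"
    have w: "0 < w" "w\<^sup>2 \<le> t\<^sup>2" "w\<^sup>2 \<le> (t - 1)\<^sup>2"
      using True by (auto simp: w_def power_mult_distrib power2_commute[of t 1]
          intro!: mult_le_one power_le_one mult_right_le_one_le mult_left_le_one_le)
    have "\<bar>bump_deriv k t\<bar> = \<bar>poly (bump_numer k) t\<bar> * (exp (- 1 / w) / w ^ (2 * k))"
      using True w by (simp add: bump_deriv_def poly_bump_base w_def abs_mult)
    also have "\<dots> \<le> M * (fact (2 * k + 2) * w\<^sup>2)"
      by (intro mult_mono M exp_neg_inverse_div_power_le w) (use True in auto)
    finally have "\<bar>bump_deriv k t\<bar> \<le> B * w\<^sup>2" by (simp add: B_def)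
    moreover have "0 \<le> B" using M by (simp add: B_def)
    ultimately show ?thesis using w by (meson mult_left_mono order_trans)
  next
    case False
    then have "bump_deriv k t = 0" by (intro bump_deriv_eq_0) linarith
    then show ?thesis using M by (simp add: B_def)
  qed
  then show ?thesis using that by blast
qed

lemma has_real_derivative_zero_of_quadratic_bound:
  fixes h :: "real \<Rightarrow> real"
  assumes "h t0 = 0" "\<And>t. \<bar>h t\<bar> \<le> B * (t - t0)\<^sup>2"
  shows "(h has_real_derivative 0) (at t0)"
proof -
  have "((\<lambda>t. (h t - h t0) / (t - t0)) \<longlongrightarrow> 0) (at t0)"
  proof (rule Lim_null_comparison)
    have "\<bar>(h t - h t0) / (t - t0)\<bar> \<le> \<bar>B\<bar> * \<bar>t - t0\<bar>" for t
    proof (cases "t = t0")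
      case False
      have "\<bar>h t\<bar> \<le> \<bar>B\<bar> * (t - t0)\<^sup>2"
        using assms(2)[of t] by (meson abs_ge_self mult_right_mono order_trans zero_le_power2)
      then have "\<bar>h t\<bar> \<le> \<bar>B\<bar> * \<bar>t - t0\<bar> * \<bar>t - t0\<bar>"
        by (metis abs_mult_self_eq mult.assoc power2_eq_square)
      then show ?thesis using False assms(1) by (simp add: abs_divide divide_le_eq)
    qed simp
    then show "\<forall>\<^sub>F t in at t0. norm ((h t - h t0) / (t - t0)) \<le> \<bar>B\<bar> * \<bar>t - t0\<bar>"
      by simp
    show "((\<lambda>t. \<bar>B\<bar> * \<bar>t - t0\<bar>) \<longlongrightarrow> 0) (at t0)"
      by (auto intro!: tendsto_eq_intros)
  qed
  then show ?thesis using assms(1) by (simp add: has_field_derivative_iff)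
qed

lemma bump_deriv_has_real_derivative:
  "(bump_deriv k has_real_derivative bump_deriv (Suc k) t) (at t)"
proof (cases "0 < t \<and> t < 1")
  case True
  then show ?thesis by (simp add: bump_deriv_has_real_derivative_inside)
next
  case False
  obtain B where B: "\<And>s. \<bar>bump_deriv k s\<bar> \<le> B * s\<^sup>2" "\<And>s. \<bar>bump_deriv k s\<bar> \<le> B * (s - 1)\<^sup>2"
    using bump_deriv_quadratic_bound[of k] by blast
  have "0 \<le> B" using B(1)[of 1] by (simp add: bump_deriv_def)
  txt \<open>Outside \<open>(0, 1)\<close> the function vanishes on the side of \<open>t\<close> away from \<open>(0, 1)\<close>,
    while towards \<open>(0, 1)\<close> the distance to \<open>t\<close> dominates the distance to the nearer endpoint.\<close>
  have "\<bar>bump_deriv k s\<bar> \<le> B * (s - t)\<^sup>2" for s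
  proof (cases "0 < s \<and> s < 1")
    case True
    from False consider "t \<le> 0" | "1 \<le> t" by linarith
    then have "s\<^sup>2 \<le> (s - t)\<^sup>2 \<or> (s - 1)\<^sup>2 \<le> (s - t)\<^sup>2"
    proof cases
      case 1
      then show ?thesis using True power_mono[of s "s - t" 2] by simp
    next
      case 2
      then show ?thesis using True power_mono[of "1 - s" "t - s" 2]
        by (simp add: power2_commute[of s 1] power2_commute[of s t])
    qed
    then show ?thesis using B \<open>0 \<le> B\<close> by (meson mult_left_mono order_trans)
  next
    case False
    then have "bump_deriv k s = 0" by (intro bump_deriv_eq_0) linarith
    then show ?thesis using \<open>0 \<le> B\<close> by simp
  qed
  then have "(bump_deriv k has_real_derivative 0) (at t)"
    by (rule has_real_derivative_zero_of_quadratic_bound[rotated]) (use False in \<open>auto intro: bump_deriv_eq_0\<close>)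
  moreover have "bump_deriv (Suc k) t = 0" using False by (intro bump_deriv_eq_0) linarith
  ultimately show ?thesis by simp
qed

lemma continuous_on_bump_deriv: "continuous_on S (bump_deriv k)"
  using bump_deriv_has_real_derivative
  by (intro continuous_at_imp_continuous_on) (blast intro: DERIV_isCont)

definition deriv_tower :: "(nat \<Rightarrow> real \<Rightarrow> real) \<Rightarrow> bool" where
  "deriv_tower F \<longleftrightarrow> (\<forall>k t. (F k has_real_derivative F (Suc k) t) (at t))"

lemma deriv_tower_iterated_deriv:
  assumes "deriv_tower F"
  shows "(deriv ^^ k) (F 0) = F k"
proof (induction k)
  case (Suc k)
  have "deriv (F k) = F (Suc k)"
    using assms by (auto simp: deriv_tower_def intro!: ext DERIV_imp_deriv)
  then show ?case using Suc by simp
qed simp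

lemma deriv_tower_smooth_fun:
  assumes "deriv_tower F"
  shows "smooth_fun (F 0)"
  using assms unfolding smooth_fun_def deriv_tower_iterated_deriv[OF assms]
  by (auto simp: deriv_tower_def real_differentiable_def)

lemma deriv_tower_diff:
  "deriv_tower F \<Longrightarrow> deriv_tower G \<Longrightarrow> deriv_tower (\<lambda>k t. F k t - G k t)"
  unfolding deriv_tower_def using DERIV_diff by blast

lemma deriv_tower_affine:
  assumes "deriv_tower F"
  shows "deriv_tower (\<lambda>k t. a ^ k * F k (a * t + b))"
  unfolding deriv_tower_def
proof (intro allI)
  fix k t
  have "((\<lambda>t. a * t + b) has_real_derivative a) (at t)"
    by (auto intro!: derivative_eq_intros)
  from DERIV_chain2[OF assms[unfolded deriv_tower_def, rule_format] this]
  have "((\<lambda>t. F k (a * t + b)) has_real_derivative F (Suc k) (a * t + b) * a) (at t)" .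
  from DERIV_cmult[OF this, of "a ^ k"]
  show "((\<lambda>t. a ^ k * F k (a * t + b)) has_real_derivative a ^ Suc k * F (Suc k) (a * t + b)) (at t)"
    by (simp add: algebra_simps)
qed

lemma deriv_tower_case_nat:
  assumes "deriv_tower F" "\<And>t. (P has_real_derivative F 0 t) (at t)"
  shows "deriv_tower (case_nat P F)"
  using assms unfolding deriv_tower_def by (auto split: nat.splits)

definition bump_primitive :: "real \<Rightarrow> real" where
  "bump_primitive v = integral {-1..v} (bump_deriv 0)"

lemma bump_primitive_eq_0:
  assumes "v \<le> 0"
  shows "bump_primitive v = 0"
proof -
  have "integral {-1..v} (bump_deriv 0) = integral {-1..v} (\<lambda>_. 0)"
    by (rule integral_cong) (use assms in \<open>auto intro: bump_deriv_eq_0\<close>)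
  then show ?thesis by (simp add: bump_primitive_def)
qed

lemma bump_primitive_has_real_derivative:
  "(bump_primitive has_real_derivative bump_deriv 0 v) (at v)"
proof (cases "v < 0")
  case True
  have "((\<lambda>_. 0) has_real_derivative 0) (at v)" by simp
  then have "(bump_primitive has_real_derivative 0) (at v)"
    by (rule has_field_derivative_transform_within_open[where S = "{..<0}"])
       (use True in \<open>auto simp: bump_primitive_eq_0\<close>)
  then show ?thesis using True by (simp add: bump_deriv_eq_0)
next
  case False
  have "((\<lambda>u. integral {-1..u} (bump_deriv 0)) has_vector_derivative bump_deriv 0 v)
      (at v within {-1..v + 1})"
    by (rule integral_has_vector_derivative) (use False continuous_on_bump_deriv in auto)
  then have "((\<lambda>u. integral {-1..u} (bump_deriv 0)) has_vector_derivative bump_deriv 0 v) (at v)"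
    using False by (subst (asm) at_within_interior) auto
  then show ?thesis
    by (simp add: has_real_derivative_iff_has_vector_derivative bump_primitive_def[abs_def])
qed

lemma has_integral_bump_deriv_0:
  "u \<le> v \<Longrightarrow> (bump_deriv 0 has_integral (bump_primitive v - bump_primitive u)) {u..v}"
  using bump_primitive_has_real_derivative
  by (intro fundamental_theorem_of_calculus)
     (auto simp: has_real_derivative_iff_has_vector_derivative intro: has_vector_derivative_at_within)

lemma bump_primitive_mono:
  assumes "u \<le> v"
  shows "bump_primitive u \<le> bump_primitive v"
  using has_integral_nonneg[OF has_integral_bump_deriv_0[OF assms] bump_deriv_0_nonneg] by simp

lemma bump_primitive_eq_1:
  assumes "1 \<le> v"
  shows "bump_primitive v = bump_primitive 1"
proof -
  have "(bump_deriv 0 has_integral 0) {1..v}"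
    by (rule has_integral_is_0) (simp add: bump_deriv_eq_0)
  from has_integral_unique[OF has_integral_bump_deriv_0[OF assms] this] show ?thesis
    by simp
qed

lemma bump_primitive_1_pos: "0 < bump_primitive 1"
proof (rule ccontr)
  assume "\<not> 0 < bump_primitive 1"
  then have "bump_primitive u = 0" if "u < 1" for u
    using bump_primitive_mono[of u 1] bump_primitive_mono[of 0 u] bump_primitive_eq_0[of 0] that
    by (cases "u \<le> 0") (auto simp: bump_primitive_eq_0)
  then have "(bump_primitive has_real_derivative 0) (at (1/2))"
    by (intro has_field_derivative_transform_within_open[where S = "{..<1}", OF DERIV_const]) auto
  from DERIV_unique[OF bump_primitive_has_real_derivative this]
  show False by (simp add: bump_deriv_def)
qed

definition smooth_step :: "real \<Rightarrow> real" where
  "smooth_step v = bump_primitive v / bump_primitive 1"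

lemma smooth_step_has_real_derivative:
  "(smooth_step has_real_derivative bump_deriv 0 v / bump_primitive 1) (at v)"
  unfolding smooth_step_def[abs_def] by (intro DERIV_cdivide bump_primitive_has_real_derivative)

lemma smooth_step_eq_0: "v \<le> 0 \<Longrightarrow> smooth_step v = 0"
  by (simp add: smooth_step_def bump_primitive_eq_0)

lemma smooth_step_eq_1:
  assumes "1 \<le> v"
  shows "smooth_step v = 1"
  using bump_primitive_1_pos by (simp add: smooth_step_def bump_primitive_eq_1[OF assms])

lemma smooth_step_mono: "u \<le> v \<Longrightarrow> smooth_step u \<le> smooth_step v"
  unfolding smooth_step_def
  by (intro divide_right_mono bump_primitive_mono less_imp_le[OF bump_primitive_1_pos])

lemma smooth_step_bounds: "0 \<le> smooth_step v \<and> smooth_step v \<le> 1"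
proof
  show "0 \<le> smooth_step v"
    using smooth_step_mono[of 0 v] smooth_step_eq_0[of 0] smooth_step_eq_0[of v] by (cases "0 \<le> v") auto
  show "smooth_step v \<le> 1"
    using smooth_step_mono[of v 1] smooth_step_eq_1[of 1] smooth_step_eq_1[of v] by (cases "v \<le> 1") auto
qed

definition smooth_step_tower :: "nat \<Rightarrow> real \<Rightarrow> real" where
  "smooth_step_tower = case_nat smooth_step (\<lambda>k t. bump_deriv k t / bump_primitive 1)"

lemma deriv_tower_smooth_step: "deriv_tower smooth_step_tower"
  unfolding smooth_step_tower_def
proof (rule deriv_tower_case_nat)
  show "deriv_tower (\<lambda>k t. bump_deriv k t / bump_primitive 1)"
    unfolding deriv_tower_def by (intro allI DERIV_cdivide bump_deriv_has_real_derivative)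
qed (rule smooth_step_has_real_derivative)

definition mollifier :: "real \<Rightarrow> real \<Rightarrow> real \<Rightarrow> real" where
  "mollifier \<epsilon> x t = bump_deriv 0 ((t - x) / \<epsilon>) / (bump_primitive 1 * \<epsilon>)"

lemma mollifier_nonneg: "0 < \<epsilon> \<Longrightarrow> 0 \<le> mollifier \<epsilon> x t"
  using bump_primitive_1_pos by (simp add: mollifier_def bump_deriv_0_nonneg)

lemma mollifier_eq_0:
  assumes "0 < \<epsilon>" "t \<notin> {x..x + \<epsilon>}"
  shows "mollifier \<epsilon> x t = 0"
proof -
  have "(t - x) / \<epsilon> \<le> 0 \<or> 1 \<le> (t - x) / \<epsilon>"
    using assms by (auto simp: divide_le_0_iff le_divide_eq)
  then show ?thesis by (simp add: mollifier_def bump_deriv_eq_0)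
qed

lemma continuous_on_mollifier:
  assumes "0 < \<epsilon>"
  shows "continuous_on S (mollifier \<epsilon> x)"
proof -
  have "continuous_on S (\<lambda>t. bump_deriv 0 ((t - x) / \<epsilon>))"
    by (rule continuous_on_compose2[OF continuous_on_bump_deriv[of UNIV]])
       (use assms in \<open>auto intro!: continuous_intros\<close>)
  then show ?thesis
    unfolding mollifier_def[abs_def] using assms bump_primitive_1_pos
    by (intro continuous_on_divide continuous_on_const) auto
qed

lemma has_integral_mollifier:
  assumes "0 < \<epsilon>"
  shows "(mollifier \<epsilon> x has_integral 1) {x..x + \<epsilon>}"
proof -
  have "((\<lambda>t. smooth_step ((t - x) / \<epsilon>)) has_real_derivative mollifier \<epsilon> x t) (at t)" for t
  proof -
    have "((\<lambda>t. (t - x) / \<epsilon>) has_real_derivative 1 / \<epsilon>) (at t)"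
      using assms by (auto intro!: derivative_eq_intros)
    from DERIV_chain2[OF smooth_step_has_real_derivative this] show ?thesis
      by (simp add: mollifier_def)
  qed
  then have "(mollifier \<epsilon> x has_integral
      smooth_step ((x + \<epsilon> - x) / \<epsilon>) - smooth_step ((x - x) / \<epsilon>)) {x..x + \<epsilon>}"
    using assms
    by (intro fundamental_theorem_of_calculus)
       (auto simp: has_real_derivative_iff_has_vector_derivative intro: has_vector_derivative_at_within)
  then show ?thesis using assms by (simp add: smooth_step_eq_0 smooth_step_eq_1)
qed

lemma mollifier_average_close:
  fixes f :: "real \<Rightarrow> real"
  assumes "0 < \<epsilon>" and f: "continuous_on {x..x + \<epsilon>} f"
    and osc: "\<And>u. u \<in> {x..x + \<epsilon>} \<Longrightarrow> \<bar>f u - f x\<bar> \<le> \<eta>"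
  obtains Y where "((\<lambda>t. f t * mollifier \<epsilon> x t) has_integral Y) UNIV" "\<bar>Y - f x\<bar> \<le> \<eta>"
proof -
  let ?S = "{x..x + \<epsilon>}" and ?\<rho> = "mollifier \<epsilon> x"
  have "(\<lambda>t. f t * ?\<rho> t) integrable_on ?S"
    by (intro integrable_continuous_interval continuous_intros f continuous_on_mollifier assms(1))
  then obtain Y where Y: "((\<lambda>t. f t * ?\<rho> t) has_integral Y) ?S" by blast
  have \<rho>: "(?\<rho> has_integral 1) ?S" by (rule has_integral_mollifier[OF assms(1)])
  have diff: "((\<lambda>t. f t * ?\<rho> t - f x * ?\<rho> t) has_integral Y - f x) ?S"
    using has_integral_diff[OF Y has_integral_mult_right[OF \<rho>, of "f x"]] by simp
  have "norm (integral ?S (\<lambda>t. f t * ?\<rho> t - f x * ?\<rho> t)) \<le> integral ?S (\<lambda>t. \<eta> * ?\<rho> t)"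
  proof (rule integral_norm_bound_integral)
    show "(\<lambda>t. f t * ?\<rho> t - f x * ?\<rho> t) integrable_on ?S" using diff by blast
    show "(\<lambda>t. \<eta> * ?\<rho> t) integrable_on ?S" using has_integral_mult_right[OF \<rho>] by blast
  next
    fix t assume "t \<in> ?S"
    then have "\<bar>f t - f x\<bar> * ?\<rho> t \<le> \<eta> * ?\<rho> t"
      by (intro mult_right_mono osc mollifier_nonneg assms(1))
    then show "norm (f t * ?\<rho> t - f x * ?\<rho> t) \<le> \<eta> * ?\<rho> t"
      using mollifier_nonneg[OF assms(1)] by (simp add: abs_mult flip: left_diff_distrib)
  qed
  then have "\<bar>Y - f x\<bar> \<le> \<eta>"
    using integral_unique[OF diff] integral_unique[OF has_integral_mult_right[OF \<rho>, of \<eta>]]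
      integral_unique[OF \<rho>] by simp
  moreover have "((\<lambda>t. f t * ?\<rho> t) has_integral Y) UNIV"
    by (rule has_integral_on_superset[OF Y]) (use mollifier_eq_0[OF assms(1)] in auto)
  ultimately show ?thesis by (rule that[rotated])
qed

text \<open>The \<open>k\<close>-th derivative of the test function
  \<open>t \<mapsto> smooth_step ((t - a) / \<epsilon>) - smooth_step ((t - b) / \<epsilon>)\<close>, written in the shape
  required by \<open>deriv_tower_affine\<close>.\<close>
definition window_tower :: "real \<Rightarrow> real \<Rightarrow> real \<Rightarrow> nat \<Rightarrow> real \<Rightarrow> real" where
  "window_tower a b \<epsilon> k t =
     (1 / \<epsilon>) ^ k * smooth_step_tower k ((1 / \<epsilon>) * t + - a / \<epsilon>)
     - (1 / \<epsilon>) ^ k * smooth_step_tower k ((1 / \<epsilon>) * t + - b / \<epsilon>)"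

lemma deriv_tower_window: "deriv_tower (window_tower a b \<epsilon>)"
  unfolding window_tower_def[abs_def]
  by (intro deriv_tower_diff deriv_tower_affine deriv_tower_smooth_step)

lemma window_tower_0:
  "window_tower a b \<epsilon> 0 t = smooth_step ((t - a) / \<epsilon>) - smooth_step ((t - b) / \<epsilon>)"
  by (simp add: window_tower_def smooth_step_tower_def diff_divide_distrib)

lemma window_tower_1:
  "window_tower a b \<epsilon> 1 t = mollifier \<epsilon> a t - mollifier \<epsilon> b t"
  by (simp add: window_tower_def smooth_step_tower_def mollifier_def diff_divide_distrib mult.commute)

lemma window_tower_0_eq_0:
  assumes "0 < \<epsilon>" "a \<le> b" "t \<notin> {a..b + \<epsilon>}"
  shows "window_tower a b \<epsilon> 0 t = 0"
proof (cases "t < a")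
  case True
  then have "(t - a) / \<epsilon> \<le> 0" "(t - b) / \<epsilon> \<le> 0"
    using assms by (auto simp: divide_le_0_iff)
  then show ?thesis by (simp add: window_tower_0 smooth_step_eq_0)
next
  case False
  then have "1 \<le> (t - a) / \<epsilon>" "1 \<le> (t - b) / \<epsilon>"
    using assms by (auto simp: le_divide_eq)
  then show ?thesis by (simp add: window_tower_0 smooth_step_eq_1)
qed

lemma abs_window_tower_0_le_indicator:
  assumes "0 < \<epsilon>" "a \<le> b"
  shows "\<bar>window_tower a b \<epsilon> 0 t\<bar> \<le> indicator {a..b + \<epsilon>} t"
proof (cases "t \<in> {a..b + \<epsilon>}")
  case True
  then show ?thesis
    using smooth_step_bounds[of "(t - a) / \<epsilon>"] smooth_step_bounds[of "(t - b) / \<epsilon>"]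
    by (simp add: window_tower_0 abs_le_iff)
next
  case False
  then show ?thesis using window_tower_0_eq_0[OF assms] by simp
qed

lemma test_fun_window:
  assumes "0 < \<epsilon>" "a \<le> b" "{a..b + \<epsilon>} \<subseteq> U"
  shows "test_fun U (window_tower a b \<epsilon> 0)"
proof -
  have supp: "{t. window_tower a b \<epsilon> 0 t \<noteq> 0} \<subseteq> {a..b + \<epsilon>}"
    using window_tower_0_eq_0[OF assms(1,2)] by blast
  then have "closure {t. window_tower a b \<epsilon> 0 t \<noteq> 0} \<subseteq> {a..b + \<epsilon>}"
    by (rule closure_minimal) simp
  moreover have "compact (closure {t. window_tower a b \<epsilon> 0 t \<noteq> 0})"
    using bounded_subset[OF _ supp] by (simp add: compact_closure)
  ultimately show ?thesis
    using deriv_tower_smooth_fun[OF deriv_tower_window] assms(3) by (auto simp: test_fun_def)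
qed

section \<open>Weak derivatives control oscillation\<close>

lemma integrable_indicator_abs_subset:
  fixes g :: "real \<Rightarrow> real"
  assumes g: "integrable lebesgue (\<lambda>x. indicator S x * \<bar>g x\<bar>)"
    and T: "T \<in> sets lebesgue" "T \<subseteq> S"
  shows "integrable lebesgue (\<lambda>x. indicator T x * \<bar>g x\<bar>)"
    and "(\<integral>x. indicator T x * \<bar>g x\<bar> \<partial>lebesgue) \<le> (\<integral>x. indicator S x * \<bar>g x\<bar> \<partial>lebesgue)"
proof -
  have "(\<lambda>x. indicator T x * \<bar>g x\<bar>) = (\<lambda>x. indicator T x *\<^sub>R (indicator S x * \<bar>g x\<bar>))"
    using T by (auto simp: indicator_def fun_eq_iff)
  then show int: "integrable lebesgue (\<lambda>x. indicator T x * \<bar>g x\<bar>)"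
    using integrable_mult_indicator[OF T(1) g] by simp
  show "(\<integral>x. indicator T x * \<bar>g x\<bar> \<partial>lebesgue) \<le> (\<integral>x. indicator S x * \<bar>g x\<bar> \<partial>lebesgue)"
    by (rule integral_mono[OF int g]) (use T in \<open>auto simp: indicator_def\<close>)
qed

text \<open>Testing the weak derivative against the window turns \<open>\<integral> f \<phi>'\<close> into the difference
  of the mollified values of \<open>f\<close> at \<open>a\<close> and \<open>b\<close>, while \<open>\<bar>\<phi>\<bar> \<le> 1\<close> bounds \<open>\<integral> g \<phi>\<close>.\<close>
lemma weak_deriv_window_bound:
  fixes f g :: "real \<Rightarrow> real"
  assumes wd: "weak_deriv f g I" and f: "continuous_on I f" and "a < b" "0 < \<epsilon>"
    and sub: "{a..b + \<epsilon>} \<subseteq> interior I"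
    and osc_a: "\<And>u. u \<in> {a..a + \<epsilon>} \<Longrightarrow> \<bar>f u - f a\<bar> \<le> \<eta>"
    and osc_b: "\<And>u. u \<in> {b..b + \<epsilon>} \<Longrightarrow> \<bar>f u - f b\<bar> \<le> \<eta>"
    and g: "integrable lebesgue (\<lambda>x. indicator {a..b + \<epsilon>} x * \<bar>g x\<bar>)"
  shows "\<bar>f a - f b\<bar> \<le> (\<integral>x. indicator {a..b + \<epsilon>} x * \<bar>g x\<bar> \<partial>lebesgue) + 2 * \<eta>"
proof -
  define \<phi> where "\<phi> = window_tower a b \<epsilon> 0"
  have "test_fun (interior I) \<phi>"
    unfolding \<phi>_def by (rule test_fun_window) (use assms in auto)
  moreover have "deriv \<phi> = (\<lambda>t. mollifier \<epsilon> a t - mollifier \<epsilon> b t)"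
    using deriv_tower_iterated_deriv[OF deriv_tower_window, of 1]
    by (simp add: \<phi>_def fun_eq_iff window_tower_1[unfolded One_nat_def])
  ultimately have int_f: "integrable lebesgue (\<lambda>x. f x * (mollifier \<epsilon> a x - mollifier \<epsilon> b x))"
    and int_g: "integrable lebesgue (\<lambda>x. g x * \<phi> x)"
    and parts: "(\<integral>x. f x * (mollifier \<epsilon> a x - mollifier \<epsilon> b x) \<partial>lebesgue) = - (\<integral>x. g x * \<phi> x \<partial>lebesgue)"
    using wd unfolding weak_deriv_def by auto
  have "{a..a + \<epsilon>} \<subseteq> I" "{b..b + \<epsilon>} \<subseteq> I"
    using sub interior_subset \<open>a < b\<close> by fastforce+
  then have ca: "continuous_on {a..a + \<epsilon>} f" and cb: "continuous_on {b..b + \<epsilon>} f"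
    using continuous_on_subset[OF f] by blast+
  obtain Ya where
      Ya: "((\<lambda>t. f t * mollifier \<epsilon> a t) has_integral Ya) UNIV" "\<bar>Ya - f a\<bar> \<le> \<eta>"
    using mollifier_average_close[of \<epsilon> a f \<eta>, OF \<open>0 < \<epsilon>\<close> ca osc_a] by blast
  obtain Yb where
      Yb: "((\<lambda>t. f t * mollifier \<epsilon> b t) has_integral Yb) UNIV" "\<bar>Yb - f b\<bar> \<le> \<eta>"
    using mollifier_average_close[of \<epsilon> b f \<eta>, OF \<open>0 < \<epsilon>\<close> cb osc_b] by blast
  have "((\<lambda>x. f x * (mollifier \<epsilon> a x - mollifier \<epsilon> b x)) has_integral Ya - Yb) UNIV"
    using has_integral_diff[OF Ya(1) Yb(1)] by (simp add: right_diff_distrib)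
  then have "(\<integral>x. f x * (mollifier \<epsilon> a x - mollifier \<epsilon> b x) \<partial>lebesgue) = Ya - Yb"
    using has_integral_unique[OF has_integral_integral_lebesgue[OF int_f]] by blast
  moreover have "norm (\<integral>x. g x * \<phi> x \<partial>lebesgue) \<le> (\<integral>x. indicator {a..b + \<epsilon>} x * \<bar>g x\<bar> \<partial>lebesgue)"
  proof (rule Bochner_Integration.integral_norm_bound_integral[OF int_g g])
    fix x
    show "norm (g x * \<phi> x) \<le> indicator {a..b + \<epsilon>} x * \<bar>g x\<bar>"
      using mult_left_mono[OF abs_window_tower_0_le_indicator[OF \<open>0 < \<epsilon>\<close>, of a b x] abs_ge_zero[of "g x"]]
        \<open>a < b\<close> by (simp add: \<phi>_def abs_mult mult.commute)
  qed
  ultimately show ?thesis using parts Ya(2) Yb(2) by simp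
qed

lemma weak_deriv_abs_diff_le_interior:
  fixes f g :: "real \<Rightarrow> real"
  assumes wd: "weak_deriv f g I" and f: "continuous_on I f"
    and "a < b" "b < c" and sub: "{a..c} \<subseteq> interior I"
    and g: "integrable lebesgue (\<lambda>x. indicator {a..c} x * \<bar>g x\<bar>)"
  shows "\<bar>f b - f a\<bar> \<le> (\<integral>x. indicator {a..c} x * \<bar>g x\<bar> \<partial>lebesgue)"
proof (rule field_le_epsilon)
  fix e :: real
  assume "0 < e"
  have "{a..c} \<subseteq> I" using sub interior_subset by blast
  then have "a \<in> I" "b \<in> I" using \<open>a < b\<close> \<open>b < c\<close> by auto
  then obtain d1 d2 where "0 < d1" "0 < d2"
    and d1: "\<And>y. y \<in> I \<Longrightarrow> \<bar>y - a\<bar> < d1 \<Longrightarrow> \<bar>f y - f a\<bar> < e / 2"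
    and d2: "\<And>y. y \<in> I \<Longrightarrow> \<bar>y - b\<bar> < d2 \<Longrightarrow> \<bar>f y - f b\<bar> < e / 2"
    using f \<open>0 < e\<close> unfolding continuous_on_iff dist_real_def by (metis half_gt_zero)
  define \<epsilon> where "\<epsilon> = min (min d1 d2) (c - b) / 2"
  have "0 < min (min d1 d2) (c - b)" "min (min d1 d2) (c - b) \<le> d1"
    "min (min d1 d2) (c - b) \<le> d2" "min (min d1 d2) (c - b) \<le> c - b"
    using \<open>0 < d1\<close> \<open>0 < d2\<close> \<open>b < c\<close> by auto
  then have \<epsilon>: "0 < \<epsilon>" "\<epsilon> < d1" "\<epsilon> < d2" "b + \<epsilon> < c"
    unfolding \<epsilon>_def by linarith+
  have "\<bar>f a - f b\<bar> \<le> (\<integral>x. indicator {a..b + \<epsilon>} x * \<bar>g x\<bar> \<partial>lebesgue) + 2 * (e / 2)"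
  proof (rule weak_deriv_window_bound[OF wd f \<open>a < b\<close> \<open>0 < \<epsilon>\<close>])
    show "{a..b + \<epsilon>} \<subseteq> interior I" using sub \<epsilon> by auto
    show "\<bar>f u - f a\<bar> \<le> e / 2" if "u \<in> {a..a + \<epsilon>}" for u
    proof -
      have "u \<in> I" using that \<epsilon> \<open>a < b\<close> \<open>{a..c} \<subseteq> I\<close> by auto
      then show ?thesis using d1[of u] that \<epsilon> by auto
    qed
    show "\<bar>f u - f b\<bar> \<le> e / 2" if "u \<in> {b..b + \<epsilon>}" for u
    proof -
      have "u \<in> I" using that \<epsilon> \<open>a < b\<close> \<open>{a..c} \<subseteq> I\<close> by auto
      then show ?thesis using d2[of u] that \<epsilon> by auto
    qed
    show "integrable lebesgue (\<lambda>x. indicator {a..b + \<epsilon>} x * \<bar>g x\<bar>)"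
      by (rule integrable_indicator_abs_subset(1)[OF g]) (use \<epsilon> in auto)
  qed
  also have "\<dots> \<le> (\<integral>x. indicator {a..c} x * \<bar>g x\<bar> \<partial>lebesgue) + e"
    using integrable_indicator_abs_subset(2)[OF g, of "{a..b + \<epsilon>}"] \<epsilon> by auto
  finally show "\<bar>f b - f a\<bar> \<le> (\<integral>x. indicator {a..c} x * \<bar>g x\<bar> \<partial>lebesgue) + e"
    by (simp add: abs_minus_commute)
qed

lemma greaterThanLessThan_subset_interior:
  fixes I :: "real set"
  assumes "is_interval I" "a \<in> I" "b \<in> I"
  shows "{a<..<b} \<subseteq> interior I"
proof (rule interior_maximal)
  show "{a<..<b} \<subseteq> I" using mem_is_interval_1_I[OF assms] by auto
qed simp

text \<open>The window estimate bounds \<open>\<bar>f b' - f a'\<bar>\<close> for \<open>a < a' < b' < b\<close>; continuity of \<open>f\<close>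
  carries the bound to the endpoints.\<close>
lemma weak_deriv_abs_diff_le:
  fixes f g :: "real \<Rightarrow> real"
  assumes wd: "weak_deriv f g I" and f: "continuous_on I f" and I: "is_interval I"
    and "a \<in> I" "b \<in> I" "a < b"
    and g: "integrable lebesgue (\<lambda>x. indicator {a..b} x * \<bar>g x\<bar>)"
  shows "\<bar>f b - f a\<bar> \<le> (\<integral>x. indicator {a..b} x * \<bar>g x\<bar> \<partial>lebesgue)"
proof (rule field_le_epsilon)
  fix e :: real
  assume "0 < e"
  obtain d1 d2 where "0 < d1" "0 < d2"
    and d1: "\<And>y. y \<in> I \<Longrightarrow> \<bar>y - a\<bar> < d1 \<Longrightarrow> \<bar>f y - f a\<bar> < e / 2"
    and d2: "\<And>y. y \<in> I \<Longrightarrow> \<bar>y - b\<bar> < d2 \<Longrightarrow> \<bar>f y - f b\<bar> < e / 2"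
    using f \<open>0 < e\<close> \<open>a \<in> I\<close> \<open>b \<in> I\<close> unfolding continuous_on_iff dist_real_def by (metis half_gt_zero)
  define m where "m = min (min d1 d2) (b - a) / 3"
  have m: "0 < m" "m < d1" "m < d2" "3 * m \<le> b - a"
    using \<open>0 < d1\<close> \<open>0 < d2\<close> \<open>a < b\<close> by (auto simp: m_def)
  have ab_I: "{a..b} \<subseteq> I" using mem_is_interval_1_I[OF I \<open>a \<in> I\<close> \<open>b \<in> I\<close>] by auto
  have "{a + m..b - m / 2} \<subseteq> interior I"
    using greaterThanLessThan_subset_interior[OF I \<open>a \<in> I\<close> \<open>b \<in> I\<close>] m by fastforce
  then have "\<bar>f (b - m) - f (a + m)\<bar> \<le> (\<integral>x. indicator {a + m..b - m / 2} x * \<bar>g x\<bar> \<partial>lebesgue)"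
    using m by (intro weak_deriv_abs_diff_le_interior[OF wd f] integrable_indicator_abs_subset(1)[OF g]) auto
  also have "\<dots> \<le> (\<integral>x. indicator {a..b} x * \<bar>g x\<bar> \<partial>lebesgue)"
    using m by (intro integrable_indicator_abs_subset(2)[OF g]) auto
  finally have "\<bar>f (b - m) - f (a + m)\<bar> \<le> (\<integral>x. indicator {a..b} x * \<bar>g x\<bar> \<partial>lebesgue)" .
  moreover have "a + m \<in> I" "b - m \<in> I" using ab_I m by auto
  then have "\<bar>f (a + m) - f a\<bar> < e / 2" "\<bar>f (b - m) - f b\<bar> < e / 2"
    using d1[of "a + m"] d2[of "b - m"] m by auto
  ultimately show "\<bar>f b - f a\<bar> \<le> (\<integral>x. indicator {a..b} x * \<bar>g x\<bar> \<partial>lebesgue) + e"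
    by linarith
qed

lemma weak_deriv_oscillation_le:
  fixes f g :: "real \<Rightarrow> real"
  assumes wd: "weak_deriv f g I" and f: "continuous_on I f" and I: "is_interval I"
    and T: "is_interval T" "T \<subseteq> I"
    and g: "integrable lebesgue (\<lambda>x. indicator T x * \<bar>g x\<bar>)"
    and "s \<in> T" "t \<in> T"
  shows "\<bar>f t - f s\<bar> \<le> (\<integral>x. indicator T x * \<bar>g x\<bar> \<partial>lebesgue)"
proof -
  have le: "\<bar>f v - f u\<bar> \<le> (\<integral>x. indicator T x * \<bar>g x\<bar> \<partial>lebesgue)"
    if "u \<in> T" "v \<in> T" "u < v" for u v
  proof -
    have uv: "{u..v} \<subseteq> T" using mem_is_interval_1_I[OF T(1) that(1,2)] by auto
    have "\<bar>f v - f u\<bar> \<le> (\<integral>x. indicator {u..v} x * \<bar>g x\<bar> \<partial>lebesgue)"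
      using that T(2) uv
      by (intro weak_deriv_abs_diff_le[OF wd f I] integrable_indicator_abs_subset(1)[OF g]) auto
    also have "\<dots> \<le> (\<integral>x. indicator T x * \<bar>g x\<bar> \<partial>lebesgue)"
      using uv by (intro integrable_indicator_abs_subset(2)[OF g]) auto
    finally show ?thesis .
  qed
  have "0 \<le> (\<integral>x. indicator T x * \<bar>g x\<bar> \<partial>lebesgue)" by (rule integral_nonneg_AE) auto
  then show ?thesis
    using le[OF \<open>s \<in> T\<close> \<open>t \<in> T\<close>] le[OF \<open>t \<in> T\<close> \<open>s \<in> T\<close>]
    by (cases s t rule: linorder_cases) (auto simp: abs_minus_commute)
qed

section \<open>Local integral bounds in \<open>L\<^sup>p\<close>\<close>

lemma borel_measurable_indicator_abs:
  fixes g :: "real \<Rightarrow> real"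
  assumes g: "g \<in> borel_measurable (lebesgue_on I)" and I: "I \<in> sets lebesgue"
    and S: "S \<subseteq> I" "S \<in> sets lebesgue"
  shows "(\<lambda>x. indicator S x * \<bar>g x\<bar>) \<in> borel_measurable lebesgue"
proof -
  have "(\<lambda>x. indicator I x *\<^sub>R g x) \<in> borel_measurable lebesgue"
    using g I by (subst (asm) borel_measurable_restrict_space_iff) auto
  then have "(\<lambda>x. indicator S x * \<bar>indicator I x *\<^sub>R g x\<bar>) \<in> borel_measurable lebesgue"
    using S by measurable
  moreover have "(\<lambda>x. indicator S x * \<bar>indicator I x *\<^sub>R g x\<bar>) = (\<lambda>x. indicator S x * \<bar>g x\<bar>)"
    using S by (auto simp: indicator_def fun_eq_iff)
  ultimately show ?thesis by simp
qed

lemma Linf_local_integral_bound: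
  fixes g :: "real \<Rightarrow> real"
  assumes I: "I \<in> sets lebesgue" and g: "in_Lp \<infinity> I g"
  obtains K where "0 \<le> K"
    and "\<And>S. S \<subseteq> I \<Longrightarrow> S \<in> fmeasurable lebesgue \<Longrightarrow>
           integrable lebesgue (\<lambda>x. indicator S x * \<bar>g x\<bar>) \<and>
           (\<integral>x. indicator S x * \<bar>g x\<bar> \<partial>lebesgue) \<le> K * measure lebesgue S"
proof -
  obtain C where "AE x in lebesgue_on I. \<bar>g x\<bar> \<le> C" and gm: "g \<in> borel_measurable (lebesgue_on I)"
    using g by (auto simp: in_Lp_def)
  then have C: "AE x in lebesgue. x \<in> I \<longrightarrow> \<bar>g x\<bar> \<le> max 0 C"
    using I by (subst (asm) AE_restrict_space_iff) (auto elim: AE_mp)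
  have "integrable lebesgue (\<lambda>x. indicator S x * \<bar>g x\<bar>) \<and>
      (\<integral>x. indicator S x * \<bar>g x\<bar> \<partial>lebesgue) \<le> max 0 C * measure lebesgue S"
    if S: "S \<subseteq> I" "S \<in> fmeasurable lebesgue" for S
  proof
    have bound: "integrable lebesgue (\<lambda>x. max 0 C * indicator S x)"
      using S(2) by (simp add: lmeasurable_iff_integrable)
    have le: "AE x in lebesgue. indicator S x * \<bar>g x\<bar> \<le> max 0 C * indicator S x"
      using C by eventually_elim (use S in \<open>auto simp: indicator_def\<close>)
    show int: "integrable lebesgue (\<lambda>x. indicator S x * \<bar>g x\<bar>)"
    proof (rule Bochner_Integration.integrable_bound[OF bound])
      show "(\<lambda>x. indicator S x * \<bar>g x\<bar>) \<in> borel_measurable lebesgue"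
        using S by (intro borel_measurable_indicator_abs[OF gm I]) auto
      show "AE x in lebesgue. norm (indicator S x * \<bar>g x\<bar>) \<le> norm (max 0 C * indicator S x)"
        using le by eventually_elim (auto simp: indicator_def)
    qed
    have "(\<integral>x. indicator S x * \<bar>g x\<bar> \<partial>lebesgue) \<le> (\<integral>x. max 0 C * indicator S x \<partial>lebesgue)"
      by (rule integral_mono_AE[OF int bound le])
    then show "(\<integral>x. indicator S x * \<bar>g x\<bar> \<partial>lebesgue) \<le> max 0 C * measure lebesgue S"
      using S by (simp add: fmeasurable_def)
  qed
  then show ?thesis using that[of "max 0 C"] by simp
qed

text \<open>Integrating this with \<open>c = L powr (- 1 / P)\<close> over a set of measure at most \<open>L\<close> gives the
  Hoelder-type bound \<open>L powr (1 - 1 / P) * (1 + \<integral> \<bar>g\<bar> powr P)\<close>.\<close>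
lemma le_add_powr_mult_powr:
  fixes x c P :: real
  assumes "0 < c" "0 \<le> x" "1 \<le> P"
  shows "x \<le> c + c powr (1 - P) * x powr P"
proof (cases "x \<le> c")
  case True
  then show ?thesis by (simp add: add_increasing2)
next
  case False
  then have "0 < x" using assms by simp
  have "x = x * (c powr (1 - P) * c powr (P - 1))"
    using assms by (simp flip: powr_add)
  also have "\<dots> \<le> x * (c powr (1 - P) * x powr (P - 1))"
    using False assms by (intro mult_left_mono powr_mono2) auto
  also have "\<dots> = c powr (1 - P) * x powr P"
    using \<open>0 < x\<close> by (simp add: powr_diff)
  finally show ?thesis using assms by simp
qed

lemma integral_indicator_abs_le_Lp:
  fixes g :: "real \<Rightarrow> real"
  assumes gm: "g \<in> borel_measurable (lebesgue_on I)" and I: "I \<in> sets lebesgue" and "1 \<le> P"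
    and h: "integrable lebesgue (\<lambda>x. indicator I x * \<bar>g x\<bar> powr P)"
    and S: "S \<subseteq> I" "S \<in> fmeasurable lebesgue" and L: "measure lebesgue S \<le> L" "0 < L"
  shows "integrable lebesgue (\<lambda>x. indicator S x * \<bar>g x\<bar>)"
    and "(\<integral>x. indicator S x * \<bar>g x\<bar> \<partial>lebesgue)
           \<le> (1 + (\<integral>x. indicator I x * \<bar>g x\<bar> powr P \<partial>lebesgue)) * L powr (1 - 1 / P)"
proof -
  define M where "M = (\<integral>x. indicator I x * \<bar>g x\<bar> powr P \<partial>lebesgue)"
  define c where "c = L powr (- 1 / P)"
  have "0 < c" using L by (simp add: c_def)
  have ind: "integrable lebesgue (indicator S :: real \<Rightarrow> real)"
    using S(2) by (simp add: lmeasurable_iff_integrable)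
  then have bound: "integrable lebesgue
      (\<lambda>x. c * indicator S x + c powr (1 - P) * (indicator I x * \<bar>g x\<bar> powr P))"
    using h by simp
  have le: "indicator S x * \<bar>g x\<bar> \<le> c * indicator S x + c powr (1 - P) * (indicator I x * \<bar>g x\<bar> powr P)" for x
    using le_add_powr_mult_powr[OF \<open>0 < c\<close> abs_ge_zero \<open>1 \<le> P\<close>, of "g x"] S \<open>0 < c\<close>
    by (auto simp: indicator_def)
  show int: "integrable lebesgue (\<lambda>x. indicator S x * \<bar>g x\<bar>)"
  proof (rule Bochner_Integration.integrable_bound[OF bound])
    show "(\<lambda>x. indicator S x * \<bar>g x\<bar>) \<in> borel_measurable lebesgue"
      using S by (intro borel_measurable_indicator_abs[OF gm I]) auto
    show "AE x in lebesgue. norm (indicator S x * \<bar>g x\<bar>)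
        \<le> norm (c * indicator S x + c powr (1 - P) * (indicator I x * \<bar>g x\<bar> powr P))"
      using le by (intro AE_I2) (simp add: order_trans[OF _ le])
  qed
  have "(\<integral>x. indicator S x * \<bar>g x\<bar> \<partial>lebesgue) \<le> c * measure lebesgue S + c powr (1 - P) * M"
    using integral_mono[OF int bound le] S ind h by (simp add: M_def fmeasurable_def)
  also have "\<dots> \<le> c * L + c powr (1 - P) * M"
    using L \<open>0 < c\<close> by simp
  also have "c * L = L powr (1 - 1 / P)"
    using powr_add[of L "- 1 / P" 1] L by (simp add: c_def)
  also have "c powr (1 - P) = L powr (- 1 / P * (1 - P))"
    by (simp add: c_def powr_powr)
  also have "- 1 / P * (1 - P) = 1 - 1 / P"
    using \<open>1 \<le> P\<close> by (simp add: field_simps)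
  finally show "(\<integral>x. indicator S x * \<bar>g x\<bar> \<partial>lebesgue) \<le> (1 + M) * L powr (1 - 1 / P)"
    by (simp add: algebra_simps)
qed

lemma Lp_local_integral_bound:
  fixes g :: "real \<Rightarrow> real"
  assumes I: "I \<in> sets lebesgue" and "1 \<le> P" and g: "in_Lp (ereal P) I g"
  obtains K where "0 \<le> K"
    and "\<And>S L. S \<subseteq> I \<Longrightarrow> S \<in> fmeasurable lebesgue \<Longrightarrow> measure lebesgue S \<le> L \<Longrightarrow> 0 < L \<Longrightarrow>
           integrable lebesgue (\<lambda>x. indicator S x * \<bar>g x\<bar>) \<and>
           (\<integral>x. indicator S x * \<bar>g x\<bar> \<partial>lebesgue) \<le> K * L powr (1 - 1 / P)"
proof -
  have gm: "g \<in> borel_measurable (lebesgue_on I)"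
    and "integrable (lebesgue_on I) (\<lambda>x. \<bar>g x\<bar> powr P)"
    using g \<open>1 \<le> P\<close> by (auto simp: in_Lp_def)
  then have h: "integrable lebesgue (\<lambda>x. indicator I x * \<bar>g x\<bar> powr P)"
    using I by (subst (asm) integrable_restrict_space) auto
  show ?thesis
  proof (rule that)
    show "0 \<le> 1 + (\<integral>x. indicator I x * \<bar>g x\<bar> powr P \<partial>lebesgue)"
      by (simp add: add_nonneg_nonneg integral_nonneg_AE)
  qed (use integral_indicator_abs_le_Lp[OF gm I \<open>1 \<le> P\<close> h] in blast)
qed

text \<open>For \<open>p = \<infinity>\<close> the exponent is \<open>1\<close>, because \<open>real_of_ereal \<infinity> = 0\<close> and \<open>1 / 0 = 0\<close>.\<close>
lemma in_Lp_local_integral_bound: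
  fixes g :: "real \<Rightarrow> real"
  assumes I: "I \<in> sets lebesgue" and "1 \<le> p" and g: "in_Lp p I g"
  obtains K where "0 \<le> K"
    and "\<And>S L. S \<subseteq> I \<Longrightarrow> S \<in> fmeasurable lebesgue \<Longrightarrow> measure lebesgue S \<le> L \<Longrightarrow> 0 < L \<Longrightarrow>
           integrable lebesgue (\<lambda>x. indicator S x * \<bar>g x\<bar>) \<and>
           (\<integral>x. indicator S x * \<bar>g x\<bar> \<partial>lebesgue) \<le> K * L powr (1 - 1 / real_of_ereal p)"
proof (cases p)
  case (real P)
  then show ?thesis using Lp_local_integral_bound[OF I _ g[unfolded real]] \<open>1 \<le> p\<close> that by auto
next
  case PInf
  obtain K where "0 \<le> K" and K: "\<And>S. S \<subseteq> I \<Longrightarrow> S \<in> fmeasurable lebesgue \<Longrightarrow>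
      integrable lebesgue (\<lambda>x. indicator S x * \<bar>g x\<bar>) \<and>
      (\<integral>x. indicator S x * \<bar>g x\<bar> \<partial>lebesgue) \<le> K * measure lebesgue S"
    using Linf_local_integral_bound[OF I g[unfolded PInf]] by blast
  show ?thesis
  proof (rule that[OF \<open>0 \<le> K\<close>])
    fix S L assume "S \<subseteq> I" "S \<in> fmeasurable lebesgue" "measure lebesgue S \<le> L" "0 < L"
    then show "integrable lebesgue (\<lambda>x. indicator S x * \<bar>g x\<bar>) \<and>
        (\<integral>x. indicator S x * \<bar>g x\<bar> \<partial>lebesgue) \<le> K * L powr (1 - 1 / real_of_ereal p)"
      using K[of S] mult_left_mono[of "measure lebesgue S" L K] \<open>0 \<le> K\<close> PInf by auto
  qed
next
  case MInf
  then show ?thesis using \<open>1 \<le> p\<close> by simp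
qed

section \<open>Covering the graph by squares\<close>

lemma bounded_diameter_square:
  fixes a c h :: real
  assumes "0 \<le> h"
  shows "bounded ({a..a + h} \<times> {c..c + h})" and "diameter ({a..a + h} \<times> {c..c + h}) \<le> 2 * h"
proof -
  show "bounded ({a..a + h} \<times> {c..c + h})" by (intro bounded_Times) auto
  show "diameter ({a..a + h} \<times> {c..c + h}) \<le> 2 * h"
  proof (rule diameter_le)
    fix x y assume "x \<in> {a..a + h} \<times> {c..c + h}" "y \<in> {a..a + h} \<times> {c..c + h}"
    then have "\<bar>fst x - fst y\<bar> \<le> h" "\<bar>snd x - snd y\<bar> \<le> h" by auto
    moreover have "norm (x - y) \<le> \<bar>fst x - fst y\<bar> + \<bar>snd x - snd y\<bar>"
      using norm_Pair_le[of "fst x - fst y" "snd x - snd y"] by (cases x; cases y) simp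
    ultimately show "norm (x - y) \<le> 2 * h" by linarith
  qed (use assms in simp)
qed

lemma cover_num_le_sum:
  assumes "finite A" "\<And>i. i \<in> A \<Longrightarrow> finite (B i)"
    and "\<And>i U. i \<in> A \<Longrightarrow> U \<in> B i \<Longrightarrow> bounded U \<and> diameter U \<le> r"
    and "F \<subseteq> (\<Union>i\<in>A. \<Union>(B i))"
  shows "cover_num F r \<le> (\<Sum>i\<in>A. card (B i))"
proof -
  have "finite (\<Union>i\<in>A. B i)" "\<forall>U\<in>(\<Union>i\<in>A. B i). bounded U \<and> diameter U \<le> r"
    using assms(1-3) by auto
  moreover have "F \<subseteq> \<Union>(\<Union>i\<in>A. B i)" using assms(4) by blast
  ultimately
  have "cover_num F r \<le> card (\<Union>i\<in>A. B i)"
    unfolding cover_num_def by (intro Least_le exI[of _ "\<Union>i\<in>A. B i"]) blast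
  also have "\<dots> \<le> (\<Sum>i\<in>A. card (B i))" by (rule card_UN_le[OF assms(1)])
  finally show ?thesis .
qed

lemma graph_subset_squares:
  fixes f :: "real \<Rightarrow> real"
  assumes "0 < h" "0 \<le> D" "T \<subseteq> {a..a + h}"
    and osc: "\<And>s t. s \<in> T \<Longrightarrow> t \<in> T \<Longrightarrow> \<bar>f t - f s\<bar> \<le> D"
  obtains B where "finite B" "real (card B) \<le> 2 * D / h + 1"
    and "\<And>U. U \<in> B \<Longrightarrow> bounded U \<and> diameter U \<le> 2 * h" and "graph T f \<subseteq> \<Union>B"
proof (cases "T = {}")
  case True
  then show ?thesis using that[of "{}"] assms by (simp add: graph_def)
next
  case False
  then obtain s where "s \<in> T" by blast
  define m where "m = nat \<lfloor>2 * D / h\<rfloor> + 1"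
  define Q where "Q j = {a..a + h} \<times> {f s - D + real j * h..f s - D + real j * h + h}" for j :: nat
  show ?thesis
  proof (rule that[of "Q ` {..<m}"])
    have "real (card (Q ` {..<m})) \<le> real m" using card_image_le[of "{..<m}" Q] by simp
    also have "\<dots> \<le> 2 * D / h + 1" using assms by (simp add: m_def)
    finally show "real (card (Q ` {..<m})) \<le> 2 * D / h + 1" .
    show "bounded U \<and> diameter U \<le> 2 * h" if "U \<in> Q ` {..<m}" for U
      using that bounded_diameter_square \<open>0 < h\<close> by (auto simp: Q_def)
    show "graph T f \<subseteq> \<Union>(Q ` {..<m})"
    proof
      fix p assume "p \<in> graph T f"
      then obtain t where "t \<in> T" and p: "p = (t, f t)" by (auto simp: graph_def)
      define y where "y = (f t - (f s - D)) / h"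
      have "0 \<le> y" "y \<le> 2 * D / h"
        using osc[OF \<open>s \<in> T\<close> \<open>t \<in> T\<close>] \<open>0 < h\<close> by (auto simp: y_def divide_right_mono)
      then have "nat \<lfloor>y\<rfloor> < m" "real (nat \<lfloor>y\<rfloor>) \<le> y" "y < real (nat \<lfloor>y\<rfloor>) + 1"
        unfolding m_def by (auto dest: floor_mono)
      then have "p \<in> Q (nat \<lfloor>y\<rfloor>)"
        using \<open>t \<in> T\<close> assms(3) \<open>0 < h\<close> by (auto simp: p Q_def y_def field_simps)
      then show "p \<in> \<Union>(Q ` {..<m})" using \<open>nat \<lfloor>y\<rfloor> < m\<close> by blast
    qed
  qed simp
qed

lemma sum_integral_indicator_abs_le:
  fixes g :: "real \<Rightarrow> real"
  assumes "finite A" "disjoint_family_on T A"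
    and "\<And>i. i \<in> A \<Longrightarrow> T i \<in> sets lebesgue" "\<And>i. i \<in> A \<Longrightarrow> T i \<subseteq> S"
    and g: "integrable lebesgue (\<lambda>x. indicator S x * \<bar>g x\<bar>)"
  shows "(\<Sum>i\<in>A. \<integral>x. indicator (T i) x * \<bar>g x\<bar> \<partial>lebesgue) \<le> (\<integral>x. indicator S x * \<bar>g x\<bar> \<partial>lebesgue)"
proof -
  have "(\<Sum>i\<in>A. \<integral>x. indicator (T i) x * \<bar>g x\<bar> \<partial>lebesgue)
      = (\<integral>x. (\<Sum>i\<in>A. indicator (T i) x * \<bar>g x\<bar>) \<partial>lebesgue)"
    using assms(3,4)
    by (intro Bochner_Integration.integral_sum[symmetric] integrable_indicator_abs_subset(1)[OF g]) auto
  also have "\<dots> = (\<integral>x. indicator (\<Union>(T ` A)) x * \<bar>g x\<bar> \<partial>lebesgue)"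
    by (simp add: indicator_UN_disjoint[OF assms(1,2)] sum_distrib_right)
  also have "\<dots> \<le> (\<integral>x. indicator S x * \<bar>g x\<bar> \<partial>lebesgue)"
    using assms(1,3,4) by (intro integrable_indicator_abs_subset(2)[OF g]) auto
  finally show ?thesis .
qed

lemma mem_column_iff:
  fixes \<alpha> h x :: real
  assumes "0 < h"
  shows "x \<in> {\<alpha> + real i * h..<\<alpha> + real i * h + h} \<longleftrightarrow> \<alpha> \<le> x \<and> i = nat \<lfloor>(x - \<alpha>) / h\<rfloor>"
proof -
  have "x \<in> {\<alpha> + real i * h..<\<alpha> + real i * h + h} \<longleftrightarrow> real i \<le> (x - \<alpha>) / h \<and> (x - \<alpha>) / h < real i + 1"
    using assms by (auto simp: field_simps)
  also have "\<dots> \<longleftrightarrow> \<lfloor>(x - \<alpha>) / h\<rfloor> = int i"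
    by (simp add: floor_eq_iff)
  also have "\<dots> \<longleftrightarrow> 0 \<le> (x - \<alpha>) / h \<and> i = nat \<lfloor>(x - \<alpha>) / h\<rfloor>"
    by (metis nat_int of_nat_0_le_iff zero_le_floor int_nat_eq)
  also have "\<dots> \<longleftrightarrow> \<alpha> \<le> x \<and> i = nat \<lfloor>(x - \<alpha>) / h\<rfloor>"
    using assms by (simp add: zero_le_divide_iff)
  finally show ?thesis .
qed

lemma interval_columns:
  fixes a h L :: real
  assumes "0 < h"
  shows "disjoint_family (\<lambda>i. {a + real i * h..<a + real i * h + h})"
    and "{a..a + L} \<subseteq> (\<Union>i<nat \<lfloor>L / h\<rfloor> + 1. {a + real i * h..<a + real i * h + h})"
    and "0 \<le> L \<Longrightarrow> i < nat \<lfloor>L / h\<rfloor> + 1 \<Longrightarrow>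
      {a + real i * h..<a + real i * h + h} \<subseteq> {a..a + L + h}"
proof -
  show "disjoint_family (\<lambda>i. {a + real i * h..<a + real i * h + h})"
    unfolding disjoint_family_on_def disjoint_iff mem_column_iff[OF assms] by auto
  show "{a..a + L} \<subseteq> (\<Union>i<nat \<lfloor>L / h\<rfloor> + 1. {a + real i * h..<a + real i * h + h})"
  proof
    fix x assume x: "x \<in> {a..a + L}"
    then have "(x - a) / h \<le> L / h" using assms by (simp add: divide_right_mono)
    then have "nat \<lfloor>(x - a) / h\<rfloor> < nat \<lfloor>L / h\<rfloor> + 1" by (auto dest: floor_mono)
    moreover have "x \<in> {a + real i * h..<a + real i * h + h}" if "i = nat \<lfloor>(x - a) / h\<rfloor>" for i
      by (subst mem_column_iff[OF assms]) (use x that in simp)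
    ultimately show "x \<in> (\<Union>i<nat \<lfloor>L / h\<rfloor> + 1. {a + real i * h..<a + real i * h + h})" by blast
  qed
  assume "0 \<le> L" "i < nat \<lfloor>L / h\<rfloor> + 1"
  then have "int i \<le> \<lfloor>L / h\<rfloor>" using assms by (simp add: less_Suc_eq_le le_nat_iff)
  then have "real i \<le> L / h" by (simp add: le_floor_iff)
  then have "real i * h \<le> L" using assms by (simp add: le_divide_eq)
  moreover have "0 \<le> real i * h" using assms by simp
  ultimately show "{a + real i * h..<a + real i * h + h} \<subseteq> {a..a + L + h}"
    by (auto simp only: subset_iff atLeastLessThan_iff atLeastAtMost_iff)
qed

lemma cover_num_graph_columns_le:
  fixes f :: "real \<Rightarrow> real" and T :: "nat \<Rightarrow> real set"
  assumes "0 < h" "finite A"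
    and "\<And>i. i \<in> A \<Longrightarrow> T i \<subseteq> {a i..a i + h}" "\<And>i. i \<in> A \<Longrightarrow> 0 \<le> D i"
    and "\<And>i s t. i \<in> A \<Longrightarrow> s \<in> T i \<Longrightarrow> t \<in> T i \<Longrightarrow> \<bar>f t - f s\<bar> \<le> D i"
    and "F \<subseteq> (\<Union>i\<in>A. graph (T i) f)"
  shows "real (cover_num F (2 * h)) \<le> (\<Sum>i\<in>A. 2 * D i / h + 1)"
proof -
  have "\<exists>B. finite B \<and> real (card B) \<le> 2 * D i / h + 1 \<and> (\<forall>U\<in>B. bounded U \<and> diameter U \<le> 2 * h)
      \<and> graph (T i) f \<subseteq> \<Union>B" if i: "i \<in> A" for i
  proof -
    obtain B where "finite B" "real (card B) \<le> 2 * D i / h + 1"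
      "\<And>U. U \<in> B \<Longrightarrow> bounded U \<and> diameter U \<le> 2 * h" "graph (T i) f \<subseteq> \<Union>B"
      using graph_subset_squares[where f = f and T = "T i",
            OF assms(1) assms(4)[OF i] assms(3)[OF i] assms(5)[OF i]] by metis
    then show ?thesis by (intro exI[of _ B]) auto
  qed
  then obtain B where B: "\<And>i. i \<in> A \<Longrightarrow> finite (B i)"
      "\<And>i. i \<in> A \<Longrightarrow> real (card (B i)) \<le> 2 * D i / h + 1"
      "\<And>i U. i \<in> A \<Longrightarrow> U \<in> B i \<Longrightarrow> bounded U \<and> diameter U \<le> 2 * h"
      "\<And>i. i \<in> A \<Longrightarrow> graph (T i) f \<subseteq> \<Union>(B i)"
    by metis
  have "F \<subseteq> (\<Union>i\<in>A. \<Union>(B i))" using assms(6) B(4) by blast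
  then have "real (cover_num F (2 * h)) \<le> (\<Sum>i\<in>A. real (card (B i)))"
    using cover_num_le_sum[OF assms(2)] B(1,3) by (simp flip: of_nat_sum)
  also have "\<dots> \<le> (\<Sum>i\<in>A. 2 * D i / h + 1)" by (intro sum_mono B(2))
  finally show ?thesis .
qed

lemma cball_Int_graph_subset:
  "cball (t0, f t0) R \<inter> graph I f \<subseteq> graph ({t0 - R..t0 + R} \<inter> I) f"
proof
  fix p assume "p \<in> cball (t0, f t0) R \<inter> graph I f"
  then obtain t where "p = (t, f t)" "t \<in> I" "dist (t0, f t0) (t, f t) \<le> R"
    by (auto simp: graph_def)
  moreover have "dist t0 t \<le> dist (t0, f t0) (t, f t)"
    using dist_fst_le[of "(t0, f t0)" "(t, f t)"] by simp
  ultimately have "t \<in> {t0 - R..t0 + R} \<inter> I" "p = (t, f t)"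
    by (auto simp: dist_real_def)
  then show "p \<in> graph ({t0 - R..t0 + R} \<inter> I) f" by (auto simp: graph_def)
qed

lemma graph_cball_cover_num_le:
  fixes f g :: "real \<Rightarrow> real"
  assumes wd: "weak_deriv f g I" and f: "continuous_on I f" and I: "is_interval I"
    and g: "\<And>S. S \<subseteq> I \<Longrightarrow> S \<in> fmeasurable lebesgue \<Longrightarrow> integrable lebesgue (\<lambda>x. indicator S x * \<bar>g x\<bar>)"
    and "t0 \<in> I" "0 < r" "r \<le> R"
  shows "real (cover_num (cball (t0, f t0) R \<inter> graph I f) r)
    \<le> 4 * R / r + 1 + 4 / r * (\<integral>x. indicator ({t0 - 2 * R..t0 + 2 * R} \<inter> I) x * \<bar>g x\<bar> \<partial>lebesgue)"
proof -
  define h where "h = r / 2"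
  define n where "n = nat \<lfloor>2 * R / h\<rfloor> + 1"
  define C where "C i = {t0 - R + real i * h..<t0 - R + real i * h + h}" for i :: nat
  define S where "S = {t0 - 2 * R..t0 + 2 * R} \<inter> I"
  define D where "D i = (\<integral>x. indicator (C i \<inter> I) x * \<bar>g x\<bar> \<partial>lebesgue)" for i
  have "0 < h" "h \<le> R" using \<open>0 < r\<close> \<open>r \<le> R\<close> by (auto simp: h_def)
  have IL: "I \<in> sets lebesgue" using real_interval_borel_measurable[OF I] by simp
  have meas: "C i \<inter> I \<in> sets lebesgue" for i unfolding C_def by (rule sets.Int[OF _ IL]) simp
  have gC: "integrable lebesgue (\<lambda>x. indicator (C i \<inter> I) x * \<bar>g x\<bar>)" for i
    using meas by (intro g bounded_set_imp_lmeasurable) (auto simp: C_def intro: bounded_Int)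
  have "{t0 - R..t0 + R} \<subseteq> (\<Union>i<n. C i)"
    using interval_columns(2)[OF \<open>0 < h\<close>, of "t0 - R" "2 * R"] by (simp add: C_def n_def add.commute)
  then have "graph ({t0 - R..t0 + R} \<inter> I) f \<subseteq> (\<Union>i\<in>{..<n}. graph (C i \<inter> I) f)"
    unfolding graph_def by blast
  with cball_Int_graph_subset
  have cover: "cball (t0, f t0) R \<inter> graph I f \<subseteq> (\<Union>i\<in>{..<n}. graph (C i \<inter> I) f)"
    by (rule subset_trans)
  have sum_D: "(\<Sum>i<n. D i) \<le> (\<integral>x. indicator S x * \<bar>g x\<bar> \<partial>lebesgue)"
    unfolding D_def
  proof (rule sum_integral_indicator_abs_le)
    show "disjoint_family_on (\<lambda>i. C i \<inter> I) {..<n}"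
      using interval_columns(1)[OF \<open>0 < h\<close>, of "t0 - R"] unfolding disjoint_family_on_def C_def by blast
    show "C i \<inter> I \<subseteq> S" if "i \<in> {..<n}" for i
      using interval_columns(3)[OF \<open>0 < h\<close>, of "2 * R" i "t0 - R"] that \<open>0 < h\<close> \<open>h \<le> R\<close>
      by (auto simp: S_def C_def n_def)
    show "integrable lebesgue (\<lambda>x. indicator S x * \<bar>g x\<bar>)"
      using IL by (intro g bounded_set_imp_lmeasurable) (auto simp: S_def intro: bounded_Int)
  qed (use meas in auto)
  have "real (cover_num (cball (t0, f t0) R \<inter> graph I f) (2 * h)) \<le> (\<Sum>i<n. 2 * D i / h + 1)"
  proof (rule cover_num_graph_columns_le[OF \<open>0 < h\<close> finite_lessThan _ _ _ cover])
    show "0 \<le> D i" for i unfolding D_def by (rule integral_nonneg_AE) auto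
    show "\<bar>f t - f s\<bar> \<le> D i" if "s \<in> C i \<inter> I" "t \<in> C i \<inter> I" for i s t
      unfolding D_def using that
      by (intro weak_deriv_oscillation_le[OF wd f I _ _ gC] is_interval_Int[OF _ I]) (auto simp: C_def)
    show "C i \<inter> I \<subseteq> {t0 - R + real i * h..t0 - R + real i * h + h}" for i
      by (auto simp: C_def)
  qed
  also have "\<dots> = 4 / r * (\<Sum>i<n. D i) + real n"
    by (simp add: h_def sum.distrib sum_distrib_left sum_divide_distrib)
  also have "\<dots> \<le> 4 / r * (\<integral>x. indicator S x * \<bar>g x\<bar> \<partial>lebesgue) + (4 * R / r + 1)"
    using sum_D \<open>0 < r\<close> \<open>0 < h\<close> \<open>h \<le> R\<close> by (intro add_mono mult_left_mono) (auto simp: n_def h_def)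
  finally show ?thesis by (simp add: S_def h_def)
qed

section \<open>The regularised Assouad spectrum of the graph\<close>

text \<open>This is where \<open>r \<le> R powr (1 / \<theta>)\<close> enters: it makes \<open>R / r \<ge> R powr (1 - 1 / \<theta>)\<close>,
  so a negative power of \<open>R\<close> costs only a small power of \<open>R / r\<close>.\<close>
lemma powr_neg_le_ratio_powr:
  fixes r R \<theta> q :: real
  assumes "0 < r" "0 < R" "r \<le> R powr (1 / \<theta>)" "0 < \<theta>" "\<theta> < 1" "0 \<le> q"
  shows "R powr (- q) \<le> (R / r) powr (\<theta> * q / (1 - \<theta>))"
proof -
  have "R powr (1 - 1 / \<theta>) = R / R powr (1 / \<theta>)"
    using assms(2) by (simp add: powr_diff)
  also have "\<dots> \<le> R / r"
    using assms(1-3) by (intro divide_left_mono) auto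
  finally have "(R powr (1 - 1 / \<theta>)) powr (\<theta> * q / (1 - \<theta>)) \<le> (R / r) powr (\<theta> * q / (1 - \<theta>))"
    using assms(4-6) by (intro powr_mono2) auto
  moreover have "(1 - 1 / \<theta>) * (\<theta> * q / (1 - \<theta>)) = - q"
    using assms(4,5) by (simp add: field_simps)
  ultimately show ?thesis by (simp add: powr_powr)
qed

lemma cover_estimate_le_powr:
  fixes r R K q e :: real
  assumes "0 < r" "r \<le> R" "0 \<le> K" "0 \<le> q" "q \<le> 1" "0 \<le> e"
    and scale: "R powr (- q) \<le> (R / r) powr e"
  shows "4 * R / r + 1 + 4 / r * (K * (4 * R) powr (1 - q)) \<le> (5 + 16 * K) * (R / r) powr (1 + e)"
proof -
  define x where "x = R / r"
  have "1 \<le> x" "0 < R" using assms(1,2) by (auto simp: x_def)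
  have x_le: "x \<le> x powr (1 + e)"
    using powr_mono[of 1 "1 + e" x] \<open>1 \<le> x\<close> \<open>0 \<le> e\<close> by simp
  have "(4 * R) powr (1 - q) = 4 powr (1 - q) * (R * R powr (- q))"
    using \<open>0 < R\<close> by (simp add: powr_mult powr_diff powr_minus divide_inverse)
  also have "\<dots> \<le> 4 * (R * R powr (- q))"
    using powr_mono[of "1 - q" 1 4] assms(4) \<open>0 < R\<close> by (intro mult_right_mono) auto
  finally have "4 / r * (K * (4 * R) powr (1 - q)) \<le> 4 / r * (K * (4 * (R * R powr (- q))))"
    using assms(1,3) by (intro mult_left_mono) auto
  also have "\<dots> = 16 * K * x * R powr (- q)"
    using assms(1) by (simp add: x_def field_simps)
  also have "\<dots> \<le> 16 * K * x * x powr e"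
    using scale assms(1,3) \<open>0 < R\<close> by (intro mult_left_mono) (auto simp: x_def)
  also have "\<dots> = 16 * K * x powr (1 + e)"
    using \<open>1 \<le> x\<close> by (simp add: powr_add)
  finally have "4 / r * (K * (4 * R) powr (1 - q)) \<le> 16 * K * x powr (1 + e)" .
  moreover have "4 * R / r + 1 \<le> 5 * x powr (1 + e)"
    using x_le \<open>1 \<le> x\<close> by (simp add: x_def)
  ultimately show ?thesis by (simp add: x_def algebra_simps)
qed

lemma graph_cover_num_le_powr:
  fixes f g :: "real \<Rightarrow> real"
  assumes wd: "weak_deriv f g I" and f: "continuous_on I f" and I: "is_interval I"
    and "0 \<le> K"
    and K: "\<And>S L. S \<subseteq> I \<Longrightarrow> S \<in> fmeasurable lebesgue \<Longrightarrow> measure lebesgue S \<le> L \<Longrightarrow> 0 < L \<Longrightarrow>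
          integrable lebesgue (\<lambda>x. indicator S x * \<bar>g x\<bar>) \<and>
          (\<integral>x. indicator S x * \<bar>g x\<bar> \<partial>lebesgue) \<le> K * L powr (1 - q)"
    and \<theta>: "0 < \<theta>" "\<theta> < 1" and q: "0 \<le> q" "q \<le> 1"
    and "0 < r" "0 < R" and r: "r \<le> R powr (1 / \<theta>)" "R powr (1 / \<theta>) < R" and "z \<in> graph I f"
  shows "real (cover_num (cball z R \<inter> graph I f) r) \<le> (5 + 16 * K) * (R / r) powr (1 + \<theta> * q / (1 - \<theta>))"
proof -
  obtain t0 where "t0 \<in> I" and z: "z = (t0, f t0)" using \<open>z \<in> graph I f\<close> by (auto simp: graph_def)
  define S where "S = {t0 - 2 * R..t0 + 2 * R} \<inter> I"
  have IL: "I \<in> sets lebesgue" using real_interval_borel_measurable[OF I] by simp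
  have "S \<in> fmeasurable lebesgue"
    using IL by (intro bounded_set_imp_lmeasurable) (auto simp: S_def intro: bounded_Int)
  moreover have "measure lebesgue S \<le> 4 * R"
    using measure_mono_fmeasurable[of S "{t0 - 2 * R..t0 + 2 * R}" lebesgue] \<open>0 < R\<close> \<open>S \<in> fmeasurable lebesgue\<close>
    by (auto simp: S_def fmeasurable_def)
  ultimately have int_S: "(\<integral>x. indicator S x * \<bar>g x\<bar> \<partial>lebesgue) \<le> K * (4 * R) powr (1 - q)"
    using K[of S "4 * R"] \<open>0 < R\<close> by (auto simp: S_def)
  have "r \<le> R" using r by simp
  have "real (cover_num (cball z R \<inter> graph I f) r) \<le> 4 * R / r + 1 + 4 / r * (\<integral>x. indicator S x * \<bar>g x\<bar> \<partial>lebesgue)"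
    unfolding z S_def
  proof (rule graph_cball_cover_num_le[OF wd f I _ \<open>t0 \<in> I\<close> \<open>0 < r\<close> \<open>r \<le> R\<close>])
    fix S' assume "S' \<subseteq> I" "S' \<in> fmeasurable lebesgue"
    then show "integrable lebesgue (\<lambda>x. indicator S' x * \<bar>g x\<bar>)"
      using K[of S' "measure lebesgue S' + 1"] by (simp add: measure_nonneg add_nonneg_pos)
  qed
  also have "\<dots> \<le> 4 * R / r + 1 + 4 / r * (K * (4 * R) powr (1 - q))"
    using int_S \<open>0 < r\<close> by (intro add_left_mono mult_left_mono) auto
  also have "\<dots> \<le> (5 + 16 * K) * (R / r) powr (1 + \<theta> * q / (1 - \<theta>))"
    using \<open>0 \<le> K\<close> \<theta> q \<open>0 < r\<close> \<open>0 < R\<close> r \<open>r \<le> R\<close>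
    by (intro cover_estimate_le_powr powr_neg_le_ratio_powr) auto
  finally show ?thesis .
qed

lemma assouad_reg_le:
  assumes "0 < \<gamma>" "0 < C"
    and "\<And>r R z. 0 < r \<Longrightarrow> 0 < R \<Longrightarrow> r \<le> R powr (1 / \<theta>) \<Longrightarrow> R powr (1 / \<theta>) < R \<Longrightarrow> R < 1 \<Longrightarrow>
           z \<in> E \<Longrightarrow> real (cover_num (cball z R \<inter> E) r) \<le> C * (R / r) powr \<gamma>"
  shows "assouad_reg \<theta> E \<le> ereal \<gamma>"
  unfolding assouad_reg_def
proof (rule INF_lower, intro CollectI conjI exI[of _ C] allI impI)
  fix r R z
  assume "0 < r \<and> 0 < R \<and> r \<le> R powr (1 / \<theta>) \<and> R powr (1 / \<theta>) < R \<and> R < 1 \<and> z \<in> E"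
  then show "real (cover_num (cball z R \<inter> E) r) \<le> C * (R / r) powr \<gamma>"
    by (intro assms(3)) auto
qed (use assms in auto)

text \<open>For \<open>p = \<infinity>\<close> the exponent is \<open>1 + \<theta> / 0 = 1\<close>.\<close>
lemma assouad_reg_graph_le:
  fixes f g :: "real \<Rightarrow> real"
  assumes wd: "weak_deriv f g I" and f: "continuous_on I f" and I: "is_interval I"
    and "1 \<le> p" and g: "in_Lp p I g" and "0 < \<theta>" "\<theta> < 1"
  shows "assouad_reg \<theta> (graph I f) \<le> ereal (1 + \<theta> / ((1 - \<theta>) * real_of_ereal p))"
proof -
  define q where "q = 1 / real_of_ereal p"
  have "0 \<le> q" using \<open>1 \<le> p\<close> by (cases p) (auto simp: q_def)
  have "q \<le> 1" using \<open>1 \<le> p\<close> by (cases p) (auto simp: q_def)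
  have "I \<in> sets lebesgue" using real_interval_borel_measurable[OF I] by simp
  then obtain K where "0 \<le> K" and K: "\<And>S L. S \<subseteq> I \<Longrightarrow> S \<in> fmeasurable lebesgue \<Longrightarrow>
      measure lebesgue S \<le> L \<Longrightarrow> 0 < L \<Longrightarrow> integrable lebesgue (\<lambda>x. indicator S x * \<bar>g x\<bar>) \<and>
      (\<integral>x. indicator S x * \<bar>g x\<bar> \<partial>lebesgue) \<le> K * L powr (1 - q)"
    using in_Lp_local_integral_bound[OF _ \<open>1 \<le> p\<close> g] unfolding q_def by blast
  have "assouad_reg \<theta> (graph I f) \<le> ereal (1 + \<theta> * q / (1 - \<theta>))"
  proof (rule assouad_reg_le[where C = "5 + 16 * K"])
    show "0 < 1 + \<theta> * q / (1 - \<theta>)" using \<open>0 < \<theta>\<close> \<open>\<theta> < 1\<close> \<open>0 \<le> q\<close> by (simp add: add_pos_nonneg)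
    show "0 < 5 + 16 * K" using \<open>0 \<le> K\<close> by simp
    show "real (cover_num (cball z R \<inter> graph I f) r) \<le> (5 + 16 * K) * (R / r) powr (1 + \<theta> * q / (1 - \<theta>))"
      if "0 < r" "0 < R" "r \<le> R powr (1 / \<theta>)" "R powr (1 / \<theta>) < R" "R < 1" "z \<in> graph I f" for r R z
      using graph_cover_num_le_powr[OF wd f I \<open>0 \<le> K\<close> K \<open>0 < \<theta>\<close> \<open>\<theta> < 1\<close> \<open>0 \<le> q\<close> \<open>q \<le> 1\<close>
          that(1-4,6)] .
  qed
  then show ?thesis by (simp add: q_def mult.commute)
qed

theorem theorem1p3:
  fixes I :: "real set" and f :: "real \<Rightarrow> real" and p :: ereal and \<theta> :: real
  assumes "is_interval I"
    and "1 \<le> p"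
    and "in_W1p p I f"
    and "continuous_on I f"
    and "0 < \<theta>"
    and "\<theta> < (if p = \<infinity> then 1 else real_of_ereal p / (real_of_ereal p + 1))"
  shows "assouad_reg \<theta> (graph I f)
           \<le> ereal (if p = \<infinity> then 1 else 1 + \<theta> / ((1 - \<theta>) * real_of_ereal p))"
proof -
  obtain g where wd: "weak_deriv f g I" and g: "in_Lp p I g"
    using assms(3) unfolding in_W1p_def by blast
  have "\<theta> < 1"
  proof (cases p)
    case (real P)
    then have "P / (P + 1) < 1" using assms(2) by simp
    then show ?thesis using assms(6) real by simp
  qed (use assms(2,6) in auto)
  with assouad_reg_graph_le[OF wd assms(4,1,2) g assms(5)] show ?thesis
    by (cases "p = \<infinity>") auto
qed

end
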